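(* Let $k$ be a field and let $I$ be an almost reverse lexicographic ideal in $R=k[x_1,\ldots,x_n]$ (the zero ideal being regarded as almost reverse lexicographic). Then the sequence $h_\bullet=(h_0,h_1,\ldots)$ with $h_d=H(R/I,d)$ is unimodal at each tail.
   Context: $H(R/I,d)=\dim_k(R/I)_d$. Degree reverse lexicographic order: for $M=x^\alpha,N=x^\beta$, $M>N$ iff $\deg M>\deg N$, or degrees are equal and for the largest $s$ with $\alpha_s\neq\beta_s$ one has $\alpha_s<\beta_s$. A monomial ideal $I$ is almost reverse lexicographic if for every monomial $M$ and every minimal monomial generator $N$ of $I$ with $\deg M=\deg N$ and $M>N$, $M\in I$. For a sequence $h_\bullet$ of nonnegative integers with $h_0=1$: put $h^{(0)}_\bullet=h_\bullet$ and, for $1\le i<h_1$, $h^{(i)}_0=1$ and $h^{(i)}_d=\max\{0,h^{(i-1)}_d-h^{(i-1)}_{d-1}\}$ for $d\ge1$. For $0\le i<\max\{1,h_1\}$ let $r_i=\min\{d\ge1: h^{(i)}_d\le h^{(i)}_{d-1}\}$ ($\infty$ if no such $d$), and let $D(h_\bullet)=\min\{i: r_i<\infty\}$. The sequence is unimodal at each tail if for every $i$ with $D(h_\bullet)\le i<\max\{1,h_1\}$ one has $h^{(i)}_d\le h^{(i)}_{d-1}$ for all $d\ge r_i$. *)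

theory Defs
  imports Main "HOL-Library.Extended_Nat"
begin

(* Monomials of R = k[x_1,...,x_n]: exponent vectors a :: nat => nat, where
   a i is the exponent of x_(i+1); entries beyond index n-1 vanish. *)
definition monomials :: "nat \<Rightarrow> (nat \<Rightarrow> nat) set" where
  "monomials n = {a. \<forall>i\<ge>n. a i = 0}"

definition mdeg :: "nat \<Rightarrow> (nat \<Rightarrow> nat) \<Rightarrow> nat" where
  "mdeg n a = (\<Sum>i<n. a i)"

definition mdvd :: "(nat \<Rightarrow> nat) \<Rightarrow> (nat \<Rightarrow> nat) \<Rightarrow> bool" where
  "mdvd a b \<longleftrightarrow> (\<forall>i. a i \<le> b i)"

(* A monomial ideal, represented by the set of monomials it contains
   (a monomial ideal is determined by, and is the k-span of, these). *)
definition monomial_ideal :: "nat \<Rightarrow> (nat \<Rightarrow> nat) set \<Rightarrow> bool" where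
  "monomial_ideal n I \<longleftrightarrow> I \<subseteq> monomials n \<and>
     (\<forall>a\<in>I. \<forall>b\<in>monomials n. mdvd a b \<longrightarrow> b \<in> I)"

definition min_gens :: "(nat \<Rightarrow> nat) set \<Rightarrow> (nat \<Rightarrow> nat) set" where
  "min_gens I = {a\<in>I. \<forall>b\<in>I. mdvd b a \<longrightarrow> b = a}"

definition drl_gt :: "nat \<Rightarrow> (nat \<Rightarrow> nat) \<Rightarrow> (nat \<Rightarrow> nat) \<Rightarrow> bool" where
  "drl_gt n a b \<longleftrightarrow> mdeg n a > mdeg n b \<or>
     (mdeg n a = mdeg n b \<and> (\<exists>s<n. a s \<noteq> b s) \<and>
      (let s = (GREATEST s. s < n \<and> a s \<noteq> b s) in a s < b s))"

definition almost_revlex :: "nat \<Rightarrow> (nat \<Rightarrow> nat) set \<Rightarrow> bool" where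
  "almost_revlex n I \<longleftrightarrow>
     (\<forall>M\<in>monomials n. \<forall>N\<in>min_gens I.
        mdeg n M = mdeg n N \<and> drl_gt n M N \<longrightarrow> M \<in> I)"

(* H(R/I,d) = dim_k (R/I)_d = number of degree-d monomials not in I *)
definition hilb :: "nat \<Rightarrow> (nat \<Rightarrow> nat) set \<Rightarrow> nat \<Rightarrow> nat" where
  "hilb n I d = card {a\<in>monomials n. mdeg n a = d \<and> a \<notin> I}"

(* h^(i)_d ; nat subtraction is max{0, _ - _} *)
fun hiter :: "(nat \<Rightarrow> nat) \<Rightarrow> nat \<Rightarrow> nat \<Rightarrow> nat" where
  "hiter h 0 d = h d"
| "hiter h (Suc i) 0 = 1"
| "hiter h (Suc i) (Suc d) = hiter h i (Suc d) - hiter h i d"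

definition r_index :: "(nat \<Rightarrow> nat) \<Rightarrow> nat \<Rightarrow> enat" where
  "r_index h i = (if \<exists>d\<ge>1. hiter h i d \<le> hiter h i (d - 1)
                   then enat (LEAST d. d \<ge> 1 \<and> hiter h i d \<le> hiter h i (d - 1))
                   else \<infinity>)"

definition D_index :: "(nat \<Rightarrow> nat) \<Rightarrow> enat" where
  "D_index h = (if \<exists>i<max 1 (h 1). r_index h i \<noteq> \<infinity>
                 then enat (LEAST i. i < max 1 (h 1) \<and> r_index h i \<noteq> \<infinity>)
                 else \<infinity>)"

definition unimodal_at_each_tail :: "(nat \<Rightarrow> nat) \<Rightarrow> bool" where
  "unimodal_at_each_tail h \<longleftrightarrow>
     (\<forall>i. D_index h \<le> enat i \<and> i < max 1 (h 1) \<longrightarrow>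
        (\<forall>d. r_index h i \<le> enat d \<longrightarrow> hiter h i d \<le> hiter h i (d - 1)))"

end

theory Submission imports Defs begin

text \<open>
  Let \<open>J\<close> be almost reverse lexicographic in \<open>p + 1\<close> variables. The standard monomials of
  degree \<open>d + 1\<close> are those free of \<open>x\<^sub>p\<^sub>+\<^sub>1\<close> together with the products \<open>x\<^sub>p\<^sub>+\<^sub>1 a\<close> of
  standard monomials \<open>a\<close> of degree \<open>d\<close>. If one such product lies in \<open>J\<close>, some minimal
  generator involving \<open>x\<^sub>p\<^sub>+\<^sub>1\<close> has degree at most \<open>d + 1\<close>; every monomial in
  \<open>x\<^sub>1, \<dots>, x\<^sub>p\<close> of that degree is revlex-larger, hence in \<open>J\<close>, and so \<open>J\<close> contains all
  monomials in \<open>x\<^sub>1, \<dots>, x\<^sub>p\<close> of degree \<open>\<ge> d + 1\<close>. Either way the truncated difference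
  \<open>H(R/J, d + 1) - H(R/J, d)\<close> is the Hilbert function of \<open>J \<inter> k[x\<^sub>1, \<dots>, x\<^sub>p]\<close> in degree
  \<open>d + 1\<close>. Iterating, \<open>h\<^sup>(\<^sup>i\<^sup>)\<close> is the Hilbert function of the restriction of \<open>I\<close> to the first
  \<open>n - i\<close> variables. Finally, once such a Hilbert function stops increasing, the restriction to
  one variable fewer vanishes in that degree and hence in all larger ones, so it never
  increases again.
\<close>

lemma monomials_mono: "k \<le> n \<Longrightarrow> monomials k \<subseteq> monomials n"
  by (auto simp: monomials_def)

lemma monomials_Suc_iff: "a \<in> monomials p \<longleftrightarrow> a \<in> monomials (Suc p) \<and> a p = 0"
  by (auto simp: monomials_def) (metis le_antisym not_less_eq_eq)

lemma mdeg_Suc: "mdeg (Suc p) a = mdeg p a + a p"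
  by (simp add: mdeg_def)

lemma mdeg_fun_upd_outside: "mdeg p (a(p := v)) = mdeg p a"
  unfolding mdeg_def by (rule sum.cong) auto

lemma mdeg_monomials_mono: "a \<in> monomials k \<Longrightarrow> k \<le> n \<Longrightarrow> mdeg n a = mdeg k a"
  unfolding mdeg_def by (rule sum.mono_neutral_right) (auto simp: monomials_def)

lemma mdeg_eq_0_iff: "a \<in> monomials n \<Longrightarrow> mdeg n a = 0 \<longleftrightarrow> a = (\<lambda>_. 0)"
  by (auto simp: mdeg_def monomials_def fun_eq_iff) (metis lessThan_iff not_le)

lemma finite_monomials_of_degree: "finite {a \<in> monomials n. mdeg n a = d}"
proof (rule finite_subset)
  show "{a \<in> monomials n. mdeg n a = d} \<subseteq>
      {f. \<forall>x. (x \<in> {..<n} \<longrightarrow> f x \<in> {..d}) \<and> (x \<notin> {..<n} \<longrightarrow> f x = 0)}"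
  proof (intro subsetI CollectI allI conjI impI)
    fix a x assume a: "a \<in> {a \<in> monomials n. mdeg n a = d}"
    show "x \<in> {..<n} \<Longrightarrow> a x \<in> {..d}"
      using a member_le_sum[of x "{..<n}" a] by (auto simp: mdeg_def)
    show "x \<notin> {..<n} \<Longrightarrow> a x = 0"
      using a by (auto simp: monomials_def)
  qed
  show "finite {f. \<forall>x. (x \<in> {..<n} \<longrightarrow> f x \<in> {..d}) \<and> (x \<notin> {..<n} \<longrightarrow> f x = 0)}"
    by (rule finite_set_of_finite_funs) simp_all
qed

lemma monomial_lower_degree_divisor:
  assumes "N \<in> monomials n" "mdeg n N = Suc d"
  obtains N' where "N' \<in> monomials n" "mdeg n N' = d" "mdvd N' N"
proof -
  have "N \<noteq> (\<lambda>_. 0)" using assms mdeg_eq_0_iff by fastforce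
  then obtain i where i: "i < n" "N i > 0"
    using assms(1) by (auto simp: monomials_def fun_eq_iff) (metis gr0I leI)
  define N' where "N' = N(i := N i - 1)"
  have "mdeg n N = N i + (\<Sum>j\<in>{..<n}-{i}. N j)" "mdeg n N' = N' i + (\<Sum>j\<in>{..<n}-{i}. N' j)"
    using i unfolding mdeg_def by (simp_all add: sum.remove)
  moreover have "(\<Sum>j\<in>{..<n}-{i}. N' j) = (\<Sum>j\<in>{..<n}-{i}. N j)"
    by (rule sum.cong) (auto simp: N'_def)
  ultimately have "mdeg n N' = d" using assms(2) i by (simp add: N'_def)
  moreover have "N' \<in> monomials n" using assms(1) i by (auto simp: monomials_def N'_def)
  moreover have "mdvd N' N" by (simp add: mdvd_def N'_def)
  ultimately show ?thesis using that by blast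
qed

lemma mdvd_refl: "mdvd a a"
  by (simp add: mdvd_def)

lemma mdvd_trans: "mdvd a b \<Longrightarrow> mdvd b c \<Longrightarrow> mdvd a c"
  unfolding mdvd_def using order_trans by blast

lemma mdvd_imp_mdeg_le: "mdvd a b \<Longrightarrow> mdeg n a \<le> mdeg n b"
  unfolding mdvd_def mdeg_def by (simp add: sum_mono)

lemma mdvd_monomials: "mdvd a b \<Longrightarrow> b \<in> monomials n \<Longrightarrow> a \<in> monomials n"
  unfolding mdvd_def monomials_def by simp (metis le_zero_eq)

lemma monomial_ideal_subset: "monomial_ideal n J \<Longrightarrow> a \<in> J \<Longrightarrow> a \<in> monomials n"
  unfolding monomial_ideal_def by blast

lemma monomial_ideal_mdvd_closed:
  "monomial_ideal n J \<Longrightarrow> a \<in> J \<Longrightarrow> b \<in> monomials n \<Longrightarrow> mdvd a b \<Longrightarrow> b \<in> J"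
  unfolding monomial_ideal_def by blast

lemma monomial_ideal_restrict:
  "monomial_ideal n J \<Longrightarrow> k \<le> n \<Longrightarrow> monomial_ideal k (J \<inter> monomials k)"
  unfolding monomial_ideal_def using monomials_mono by blast

lemma min_gens_restrict: "N \<in> min_gens (J \<inter> monomials k) \<Longrightarrow> N \<in> min_gens J"
  unfolding min_gens_def using mdvd_monomials by blast

lemma min_gens_mdvd_exists:
  assumes "monomial_ideal n J" "c \<in> J"
  obtains G where "G \<in> min_gens J" "mdvd G c"
proof -
  obtain G where G: "G \<in> J" "mdvd G c"
    and least: "\<And>b. b \<in> J \<Longrightarrow> mdvd b c \<Longrightarrow> mdeg n G \<le> mdeg n b"
    using ex_has_least_nat[of "\<lambda>G. G \<in> J \<and> mdvd G c" c "mdeg n"] assms(2) mdvd_refl by blast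
  have "b = G" if b: "b \<in> J" "mdvd b G" for b
  proof (rule ext)
    fix i
    show "b i = G i"
    proof (cases "i < n")
      case True
      show ?thesis
      proof (rule ccontr)
        assume "b i \<noteq> G i"
        with b(2) have "b i < G i" by (simp add: mdvd_def le_neq_implies_less)
        then have "mdeg n b < mdeg n G" unfolding mdeg_def
          using True b(2) by (intro sum_strict_mono_ex1) (auto simp: mdvd_def)
        with least[OF b(1) mdvd_trans[OF b(2) G(2)]] show False by simp
      qed
    next
      case False
      have "b \<in> monomials n" "G \<in> monomials n"
        using monomial_ideal_subset[OF assms(1)] b(1) G(1) by blast+
      with False show ?thesis by (simp add: monomials_def)
    qed
  qed
  then have "G \<in> min_gens J" using G(1) by (simp add: min_gens_def)
  with G(2) show ?thesis using that by blast
qed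

lemma drl_gt_monomials_mono:
  assumes "a \<in> monomials k" "b \<in> monomials k" "k \<le> n"
  shows "drl_gt n a b = drl_gt k a b"
proof -
  have diff_below: "s < k" if "a s \<noteq> b s" for s
    using assms(1,2) that by (cases "s < k") (auto simp: monomials_def)
  then have "(\<lambda>s. s < n \<and> a s \<noteq> b s) = (\<lambda>s. s < k \<and> a s \<noteq> b s)"
    using assms(3) order_less_le_trans by (auto simp: fun_eq_iff)
  moreover have "(\<exists>s<n. a s \<noteq> b s) \<longleftrightarrow> (\<exists>s<k. a s \<noteq> b s)"
    using diff_below assms(3) by (meson order_less_le_trans)
  ultimately show ?thesis
    unfolding drl_gt_def using mdeg_monomials_mono[OF assms(1,3)] mdeg_monomials_mono[OF assms(2,3)]
    by simp
qed

lemma almost_revlex_restrict: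
  assumes "almost_revlex n J" "k \<le> n"
  shows "almost_revlex k (J \<inter> monomials k)"
  unfolding almost_revlex_def
proof (intro ballI impI)
  fix M N assume M: "M \<in> monomials k" and N: "N \<in> min_gens (J \<inter> monomials k)"
    and gt: "mdeg k M = mdeg k N \<and> drl_gt k M N"
  have N': "N \<in> min_gens J" "N \<in> monomials k"
    using N min_gens_restrict[OF N] by (auto simp: min_gens_def)
  have "M \<in> monomials n" using monomials_mono[OF assms(2)] M by blast
  moreover have "mdeg n M = mdeg n N \<and> drl_gt n M N"
    using gt mdeg_monomials_mono[OF M assms(2)] mdeg_monomials_mono[OF N'(2) assms(2)]
      drl_gt_monomials_mono[OF M N'(2) assms(2)] by simp
  ultimately have "M \<in> J" using assms(1) N'(1) unfolding almost_revlex_def by blast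
  with M show "M \<in> J \<inter> monomials k" by simp
qed

definition standard_monomials :: "nat \<Rightarrow> (nat \<Rightarrow> nat) set \<Rightarrow> nat \<Rightarrow> (nat \<Rightarrow> nat) set" where
  "standard_monomials n J d = {a \<in> monomials n. mdeg n a = d \<and> a \<notin> J}"

lemma hilb_eq_card: "hilb n J d = card (standard_monomials n J d)"
  by (simp add: hilb_def standard_monomials_def)

lemma finite_standard_monomials: "finite (standard_monomials n J d)"
  by (rule finite_subset[OF _ finite_monomials_of_degree[of n d]])
    (auto simp: standard_monomials_def)

lemma hilb_eq_0_iff: "hilb n J d = 0 \<longleftrightarrow> (\<forall>a \<in> monomials n. mdeg n a = d \<longrightarrow> a \<in> J)"
  using finite_standard_monomials[of n J d]
  by (auto simp: hilb_eq_card standard_monomials_def)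

lemma hilb_0_Suc: "hilb 0 J (Suc d) = 0"
  by (simp add: hilb_def mdeg_def)

lemma hilb_eq_0_if_one_mem:
  assumes "monomial_ideal n J" "(\<lambda>_. 0) \<in> J"
  shows "hilb n J d = 0"
  using monomial_ideal_mdvd_closed[OF assms] by (simp add: hilb_eq_0_iff mdvd_def)

lemma hilb_eq_0_mono:
  assumes "monomial_ideal n J" "hilb n J e = 0" "e \<le> d"
  shows "hilb n J d = 0"
  using assms(3)
proof (induction rule: dec_induct)
  case base
  show ?case using assms(2) .
next
  case (step d)
  show ?case unfolding hilb_eq_0_iff
  proof (intro ballI impI)
    fix N assume "N \<in> monomials n" "mdeg n N = Suc d"
    then obtain N' where "N' \<in> monomials n" "mdeg n N' = d" "mdvd N' N"
      by (rule monomial_lower_degree_divisor)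
    with step.IH \<open>N \<in> monomials n\<close> show "N \<in> J"
      using monomial_ideal_mdvd_closed[OF assms(1)] by (auto simp: hilb_eq_0_iff)
  qed
qed

section \<open>Splitting off the last variable\<close>

lemma standard_monomials_Suc_decomp:
  assumes "monomial_ideal (Suc p) J"
  shows "standard_monomials (Suc p) J (Suc d) =
    standard_monomials p (J \<inter> monomials p) (Suc d) \<union>
    (\<lambda>a. a(p := Suc (a p))) ` {a \<in> standard_monomials (Suc p) J d. a(p := Suc (a p)) \<notin> J}"
    (is "?S = ?S' \<union> ?bump ` ?K")
proof (intro equalityI subsetI)
  fix b assume b: "b \<in> ?S"
  show "b \<in> ?S' \<union> ?bump ` ?K"
  proof (cases "b p = 0")
    case True
    then have "b \<in> ?S'"
      using b monomials_Suc_iff[of b p] mdeg_Suc[of p b] by (simp add: standard_monomials_def)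
    then show ?thesis by blast
  next
    case False
    define a where "a = b(p := b p - 1)"
    have "?bump a = b" using False by (auto simp: a_def)
    moreover have "mdvd a b" by (simp add: a_def mdvd_def)
    moreover have "a \<in> monomials (Suc p)" "mdeg (Suc p) a = d"
      using b False mdeg_Suc[of p a] mdeg_Suc[of p b] mdeg_fun_upd_outside[of p b]
      by (auto simp: standard_monomials_def a_def monomials_def)
    ultimately have "a \<in> ?K"
      using b monomial_ideal_mdvd_closed[OF assms] by (auto simp: standard_monomials_def)
    with \<open>?bump a = b\<close> show ?thesis by blast
  qed
next
  fix b assume "b \<in> ?S' \<union> ?bump ` ?K"
  then consider "b \<in> ?S'" | a where "a \<in> ?K" "b = ?bump a" by blast
  then show "b \<in> ?S"
  proof cases
    case 1
    then have "b \<in> monomials p" "mdeg p b = Suc d" "b \<notin> J"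
      by (auto simp: standard_monomials_def)
    then show ?thesis
      using monomials_Suc_iff[of b p] mdeg_Suc[of p b] by (simp add: standard_monomials_def)
  next
    case 2
    then show ?thesis
      using mdeg_Suc[of p a] mdeg_Suc[of p b] mdeg_fun_upd_outside[of p a]
      by (auto simp: standard_monomials_def monomials_def)
  qed
qed

lemma hilb_Suc_decomp:
  assumes "monomial_ideal (Suc p) J"
  shows "hilb (Suc p) J (Suc d) = hilb p (J \<inter> monomials p) (Suc d) +
    card {a \<in> standard_monomials (Suc p) J d. a(p := Suc (a p)) \<notin> J}"
    (is "_ = _ + card ?K")
proof -
  let ?bump = "\<lambda>a::nat \<Rightarrow> nat. a(p := Suc (a p))"
  have "inj_on ?bump ?K"
    by (rule inj_onI) (metis fun_upd_eqD fun_upd_idem_iff fun_upd_upd nat.inject)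
  moreover have "standard_monomials p (J \<inter> monomials p) (Suc d) \<inter> ?bump ` ?K = {}"
    by (auto simp: standard_monomials_def monomials_def)
  moreover have "finite ?K" using finite_standard_monomials by simp
  ultimately show ?thesis
    unfolding hilb_eq_card standard_monomials_Suc_decomp[OF assms]
    by (simp add: card_Un_disjoint card_image finite_standard_monomials)
qed

lemma drl_gt_if_last_var:
  assumes "M \<in> monomials p" "G \<in> monomials (Suc p)" "G p \<noteq> 0"
    and "mdeg (Suc p) M = mdeg (Suc p) G"
  shows "drl_gt (Suc p) M G"
proof -
  have "M p = 0" using assms(1) by (simp add: monomials_def)
  then have "(GREATEST s. s < Suc p \<and> M s \<noteq> G s) = p"
    using assms(3) by (intro Greatest_equality) auto
  with \<open>M p = 0\<close> assms(3,4) show ?thesis by (auto simp: drl_gt_def)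
qed

lemma almost_revlex_hilb_eq_0:
  assumes mi: "monomial_ideal (Suc p) J" and ar: "almost_revlex (Suc p) J"
    and a: "a \<in> standard_monomials (Suc p) J d" "a(p := Suc (a p)) \<in> J"
  shows "hilb p (J \<inter> monomials p) (Suc d) = 0"
proof -
  obtain G where G: "G \<in> min_gens J" "mdvd G (a(p := Suc (a p)))"
    using min_gens_mdvd_exists[OF mi a(2)] .
  have "G \<in> J" using G(1) by (simp add: min_gens_def)
  then have GM: "G \<in> monomials (Suc p)" by (rule monomial_ideal_subset[OF mi])
  have "G p \<noteq> 0"
  proof
    assume "G p = 0"
    with G(2) have "mdvd G a" unfolding mdvd_def by (metis fun_upd_apply zero_le)
    with a(1) \<open>G \<in> J\<close> show False
      using monomial_ideal_mdvd_closed[OF mi] by (auto simp: standard_monomials_def)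
  qed
  have "mdeg (Suc p) (a(p := Suc (a p))) = Suc d"
    using a(1) mdeg_Suc[of p a] mdeg_Suc[of p "a(p := Suc (a p))"] mdeg_fun_upd_outside[of p a]
    by (simp add: standard_monomials_def)
  then have deg_G: "mdeg (Suc p) G \<le> Suc d"
    using mdvd_imp_mdeg_le[OF G(2), of "Suc p"] by simp
  \<comment> \<open>every monomial free of the last variable is revlex-larger than \<open>G\<close>, which involves it\<close>
  have "hilb p (J \<inter> monomials p) (mdeg (Suc p) G) = 0"
  proof (unfold hilb_eq_0_iff, intro ballI impI)
    fix M assume M: "M \<in> monomials p" "mdeg p M = mdeg (Suc p) G"
    have M': "M \<in> monomials (Suc p)" "mdeg (Suc p) M = mdeg (Suc p) G"
      using M monomials_Suc_iff[of M p] mdeg_Suc[of p M] by auto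
    with drl_gt_if_last_var[OF M(1) GM \<open>G p \<noteq> 0\<close>] G(1) ar have "M \<in> J"
      unfolding almost_revlex_def by blast
    with M(1) show "M \<in> J \<inter> monomials p" by simp
  qed
  with deg_G show ?thesis
    using hilb_eq_0_mono monomial_ideal_restrict[OF mi, of p] by simp
qed

lemma hilb_diff_almost_revlex:
  assumes "monomial_ideal (Suc p) J" "almost_revlex (Suc p) J"
  shows "hilb (Suc p) J (Suc d) - hilb (Suc p) J d = hilb p (J \<inter> monomials p) (Suc d)"
proof (cases "\<forall>a \<in> standard_monomials (Suc p) J d. a(p := Suc (a p)) \<notin> J")
  case True
  then have "{a \<in> standard_monomials (Suc p) J d. a(p := Suc (a p)) \<notin> J} =
      standard_monomials (Suc p) J d" by blast
  then show ?thesis using hilb_Suc_decomp[OF assms(1)] by (simp add: hilb_eq_card)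
next
  case False
  then have "hilb p (J \<inter> monomials p) (Suc d) = 0"
    using almost_revlex_hilb_eq_0[OF assms] by blast
  moreover have "card {a \<in> standard_monomials (Suc p) J d. a(p := Suc (a p)) \<notin> J} \<le>
      hilb (Suc p) J d"
    unfolding hilb_eq_card by (intro card_mono finite_standard_monomials) auto
  ultimately show ?thesis using hilb_Suc_decomp[OF assms(1)] by simp
qed

lemma hilb_descent_persists:
  assumes "monomial_ideal n J" "almost_revlex n J" "hilb n J (Suc d) \<le> hilb n J d"
  shows "hilb n J (Suc (Suc d)) \<le> hilb n J (Suc d)"
proof (cases n)
  case 0
  then show ?thesis by (simp add: hilb_0_Suc)
next
  case (Suc p)
  have "monomial_ideal p (J \<inter> monomials p)"
    using monomial_ideal_restrict[OF assms(1)] Suc by simp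
  moreover have "hilb p (J \<inter> monomials p) (Suc d) = 0"
    using hilb_diff_almost_revlex[of p J d] assms Suc by simp
  ultimately have "hilb p (J \<inter> monomials p) (Suc (Suc d)) = 0"
    using hilb_eq_0_mono[of p _ "Suc d" "Suc (Suc d)"] by simp
  then show ?thesis using hilb_diff_almost_revlex[of p J "Suc d"] assms Suc by simp
qed

section \<open>The iterated difference sequences\<close>

lemma hiter_hilb:
  assumes mi: "monomial_ideal n I" and ar: "almost_revlex n I" and one: "(\<lambda>_. 0) \<notin> I"
  shows "hiter (hilb n I) i d = hilb (n - i) (I \<inter> monomials (n - i)) d"
proof (induction i arbitrary: d)
  case 0
  show ?case unfolding hiter.simps hilb_eq_card standard_monomials_def
    by (rule arg_cong[where f = card]) auto
next
  case (Suc i)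
  show ?case
  proof (cases d)
    case 0
    have "standard_monomials (n - Suc i) (I \<inter> monomials (n - Suc i)) 0 = {\<lambda>_. 0}"
      using one mdeg_eq_0_iff by (auto simp: standard_monomials_def monomials_def mdeg_def)
    with 0 show ?thesis by (simp add: hilb_eq_card)
  next
    case (Suc d')
    then have step: "hiter (hilb n I) (Suc i) d =
        hilb (n - i) (I \<inter> monomials (n - i)) (Suc d') - hilb (n - i) (I \<inter> monomials (n - i)) d'"
      using Suc.IH by simp
    show ?thesis
    proof (cases "n - i")
      case 0
      with step Suc show ?thesis by (simp add: hilb_0_Suc)
    next
      case (Suc p)
      have "monomial_ideal (Suc p) (I \<inter> monomials (Suc p))"
        using monomial_ideal_restrict[OF mi, of "Suc p"] Suc by simp
      moreover have "almost_revlex (Suc p) (I \<inter> monomials (Suc p))"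
        using almost_revlex_restrict[OF ar, of "Suc p"] Suc by simp
      moreover have "I \<inter> monomials (Suc p) \<inter> monomials p = I \<inter> monomials p"
        using monomials_mono[of p "Suc p"] by auto
      moreover have "n - Suc i = p" using Suc by simp
      ultimately show ?thesis
        using hilb_diff_almost_revlex[of p "I \<inter> monomials (Suc p)" d'] step Suc \<open>d = Suc d'\<close>
        by simp
    qed
  qed
qed

lemma hiter_descent_from_r_index:
  assumes persist: "\<And>e. hiter h i (Suc e) \<le> hiter h i e \<Longrightarrow>
      hiter h i (Suc (Suc e)) \<le> hiter h i (Suc e)"
    and r: "r_index h i \<le> enat d"
  shows "hiter h i d \<le> hiter h i (d - 1)"
proof -
  define P where "P = (\<lambda>d. d \<ge> 1 \<and> hiter h i d \<le> hiter h i (d - 1))"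
  have ex: "\<exists>d. P d" using r unfolding r_index_def P_def by (auto split: if_splits)
  with r have "Least P \<le> d" unfolding r_index_def P_def by simp
  then have "P d"
  proof (induction rule: dec_induct)
    case base
    from ex show ?case by (rule LeastI_ex)
  next
    case (step e)
    then obtain e' where "e = Suc e'" unfolding P_def by (cases e) auto
    with step persist show ?case by (simp add: P_def)
  qed
  then show ?thesis by (simp add: P_def)
qed

theorem proposition3p6:
  fixes n :: nat and I :: "(nat \<Rightarrow> nat) set"
  assumes "monomial_ideal n I"
    and "almost_revlex n I"
  shows "unimodal_at_each_tail (hilb n I)"
  unfolding unimodal_at_each_tail_def
proof (intro allI impI)
  fix i d
  assume i: "D_index (hilb n I) \<le> enat i \<and> i < max 1 (hilb n I 1)"
    and r: "r_index (hilb n I) i \<le> enat d"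
  show "hiter (hilb n I) i d \<le> hiter (hilb n I) i (d - 1)"
  proof (cases "(\<lambda>_. 0) \<in> I")
    case True
    \<comment> \<open>then \<open>h\<^sub>1 = 0\<close> forces \<open>i = 0\<close>, so the convention \<open>h\<^sup>(\<^sup>i\<^sup>)\<^sub>0 = 1\<close> never enters\<close>
    then have "hilb n I = (\<lambda>_. 0)" using hilb_eq_0_if_one_mem[OF assms(1)] by auto
    with i show ?thesis by simp
  next
    case False
    let ?J = "I \<inter> monomials (n - i)"
    have "hilb (n - i) ?J (Suc (Suc e)) \<le> hilb (n - i) ?J (Suc e)"
      if "hilb (n - i) ?J (Suc e) \<le> hilb (n - i) ?J e" for e
      using hilb_descent_persists[OF monomial_ideal_restrict[OF assms(1)]
          almost_revlex_restrict[OF assms(2)] that] by simp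
    then show ?thesis
      using hiter_descent_from_r_index[OF _ r] hiter_hilb[OF assms False] by simp
  qed
qed

end
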